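(* Let $J_1$ be the graph with vertex set $\{a,b,c,d,e\}$ and edge set $\{ab,ac,bc,ae,be,cd,de,ad\}$, and let $J_2$ be the graph with the same vertex set and edge set $\{ab,ac,bc,ae,be,cd,de,bd\}$. Let $G$ be any graph obtained by taking six graphs $Q_1,\dots,Q_6$, each isomorphic to $J_1$ or to $J_2$ (the choice may differ for different $i$), pairwise vertex-disjoint, and identifying the copies of the edge $ab$ (vertex $a$ of each copy identified to a single vertex $a$, vertex $b$ of each copy identified to a single vertex $b$), the remaining vertices staying distinct. Then $G$ is not $3$-choosable.
   Context: A graph $G$ is $k$-choosable if for every assignment $L$ of a set $L(v)$ of $k$ colours to each vertex $v$, there is a proper colouring $\phi$ of $G$ with $\phi(v)\in L(v)$ for all $v$. In the paper, the edge $ab$ of $J_1$, $J_2$ and of $G$ is called the handle; the class of all graphs $G$ so obtained is denoted $\mathcal{J}$. *)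

theory Defs
  imports Main
begin

definition adj :: "('v \<times> 'v) set \<Rightarrow> 'v \<Rightarrow> 'v \<Rightarrow> bool" where
  "adj E u v \<longleftrightarrow> (u, v) \<in> E \<or> (v, u) \<in> E"

definition choosable :: "'v set \<Rightarrow> ('v \<times> 'v) set \<Rightarrow> nat \<Rightarrow> bool" where
  "choosable V E k \<longleftrightarrow>
     (\<forall>L :: 'v \<Rightarrow> nat set. (\<forall>v\<in>V. finite (L v) \<and> card (L v) = k) \<longrightarrow>
        (\<exists>\<phi> :: 'v \<Rightarrow> nat. (\<forall>v\<in>V. \<phi> v \<in> L v) \<and>
            (\<forall>u\<in>V. \<forall>v\<in>V. adj E u v \<longrightarrow> \<phi> u \<noteq> \<phi> v)))"

datatype lab = a | b | c | d | e

definition J1_edges :: "(lab \<times> lab) set" where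
  "J1_edges = {(a,b),(a,c),(b,c),(a,e),(b,e),(c,d),(d,e),(a,d)}"

definition J2_edges :: "(lab \<times> lab) set" where
  "J2_edges = {(a,b),(a,c),(b,c),(a,e),(b,e),(c,d),(d,e),(b,d)}"

text \<open>Vertices of the glued graph: the shared handle vertices a and b, and
  the private vertices c, d, e of copy i.\<close>
datatype gv = Ha | Hb | Cp nat lab

definition embed :: "nat \<Rightarrow> lab \<Rightarrow> gv" where
  "embed i x = (if x = a then Ha else if x = b then Hb else Cp i x)"

text \<open>s i = True means copy Q_i is J1, s i = False means Q_i is J2.\<close>
definition glued_V :: "gv set" where
  "glued_V = {embed i x | i x. i < 6}"

definition glued_E :: "(nat \<Rightarrow> bool) \<Rightarrow> (gv \<times> gv) set" where
  "glued_E s = {(embed i x, embed i y) | i x y.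
                  i < 6 \<and> (x, y) \<in> (if s i then J1_edges else J2_edges)}"

end

theory Submission
  imports Defs
begin

text \<open>The handle vertices a and b get the list {1,2,3}. Each of the six ordered pairs
  (\<alpha>, \<beta>) of distinct colours from {1,2,3} is assigned to one copy Q_i, whose vertex c gets
  {\<alpha>, \<beta>, 4}, vertex e gets {\<alpha>, \<beta>, 5}, and vertex d gets {4, 5} together with \<alpha> or \<beta>
  according to whether d is adjacent to a or to b. Whatever colours a and b receive, they
  form the pair of some copy; in that copy c is forced to 4 and e to 5, so d must take
  the colour of its neighbour on the handle.\<close>

abbreviation J_edges :: "bool \<Rightarrow> (lab \<times> lab) set" where
  "J_edges j1 \<equiv> if j1 then J1_edges else J2_edges"

lemma choosableD:
  fixes L :: "'v \<Rightarrow> nat set"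
  assumes "choosable V E k" "\<And>v. v \<in> V \<Longrightarrow> finite (L v) \<and> card (L v) = k"
  obtains \<phi> where "\<forall>v\<in>V. \<phi> v \<in> L v" "\<forall>u\<in>V. \<forall>v\<in>V. adj E u v \<longrightarrow> \<phi> u \<noteq> \<phi> v"
proof -
  have "\<forall>v\<in>V. finite (L v) \<and> card (L v) = k"
    using assms(2) by blast
  with assms(1) show ?thesis
    using that unfolding choosable_def by blast
qed

definition handle_pair :: "nat \<Rightarrow> nat \<times> nat" where
  "handle_pair i = [(1,2), (1,3), (2,1), (2,3), (3,1), (3,2)] ! i"

lemma handle_pair_image:
  "handle_pair ` {..<6} = {(\<alpha>, \<beta>). \<alpha> \<in> {1,2,3} \<and> \<beta> \<in> {1,2,3} \<and> \<alpha> \<noteq> \<beta>}"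
proof -
  have "{..<6::nat} = {0,1,2,3,4,5}" by auto
  then have "handle_pair ` {..<6} = {(1,2), (1,3), (2,1), (2,3), (3,1), (3,2)}"
    by (simp add: handle_pair_def)
  then show ?thesis by auto
qed

definition gadget_lists :: "bool \<Rightarrow> nat \<times> nat \<Rightarrow> lab \<Rightarrow> nat set" where
  "gadget_lists j1 p x = (case p of (\<alpha>, \<beta>) \<Rightarrow> (case x of
      a \<Rightarrow> {1,2,3} | b \<Rightarrow> {1,2,3}
    | c \<Rightarrow> {\<alpha>, \<beta>, 4} | e \<Rightarrow> {\<alpha>, \<beta>, 5}
    | d \<Rightarrow> {if j1 then \<alpha> else \<beta>, 4, 5}))"

lemma card_gadget_lists:
  assumes "\<alpha> \<in> {1,2,3}" "\<beta> \<in> {1,2,3}" "\<alpha> \<noteq> \<beta>"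
  shows "finite (gadget_lists j1 (\<alpha>, \<beta>) x) \<and> card (gadget_lists j1 (\<alpha>, \<beta>) x) = 3"
  using assms by (cases x; cases j1) (auto simp: gadget_lists_def)

lemma gadget_handle_colouring_not_extendable:
  assumes lists: "\<And>x. \<psi> x \<in> gadget_lists j1 (\<alpha>, \<beta>) x"
    and proper: "\<And>x y. (x, y) \<in> J_edges j1 \<Longrightarrow> \<psi> x \<noteq> \<psi> y"
    and "\<psi> a = \<alpha>" "\<psi> b = \<beta>"
  shows False
proof -
  have shared_edge: "(x, y) \<in> J_edges j1"
    if "(x, y) \<in> {(a,b), (a,c), (b,c), (a,e), (b,e), (c,d), (d,e)}" for x y
    using that by (cases j1) (auto simp: J1_edges_def J2_edges_def)
  have "\<psi> c = 4"
    using lists[of c] proper[OF shared_edge, of a c] proper[OF shared_edge, of b c] assms(3,4)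
    by (auto simp: gadget_lists_def)
  moreover have "\<psi> e = 5"
    using lists[of e] proper[OF shared_edge, of a e] proper[OF shared_edge, of b e] assms(3,4)
    by (auto simp: gadget_lists_def)
  ultimately have "\<psi> d = (if j1 then \<alpha> else \<beta>)"
    using lists[of d] proper[OF shared_edge, of c d] proper[OF shared_edge, of d e]
    by (auto simp: gadget_lists_def)
  then show False
    using proper[of a d] proper[of b d] assms(3,4)
    by (cases j1) (auto simp: J1_edges_def J2_edges_def)
qed

definition glued_lists :: "(nat \<Rightarrow> bool) \<Rightarrow> gv \<Rightarrow> nat set" where
  "glued_lists s v = (case v of
      Ha \<Rightarrow> {1,2,3} | Hb \<Rightarrow> {1,2,3}
    | Cp i x \<Rightarrow> gadget_lists (s i) (handle_pair i) x)"

lemma glued_lists_embed: "glued_lists s (embed i x) = gadget_lists (s i) (handle_pair i) x"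
  by (cases "handle_pair i") (auto simp: glued_lists_def embed_def gadget_lists_def)

lemma embed_in_glued_V: "i < 6 \<Longrightarrow> embed i x \<in> glued_V"
  unfolding glued_V_def by blast

lemma adj_glued_E_embed:
  "i < 6 \<Longrightarrow> (x, y) \<in> J_edges (s i) \<Longrightarrow>
    adj (glued_E s) (embed i x) (embed i y)"
  unfolding glued_E_def adj_def by blast

lemma card_glued_lists:
  assumes "v \<in> glued_V"
  shows "finite (glued_lists s v) \<and> card (glued_lists s v) = 3"
proof -
  obtain i x where i: "i < 6" and v: "v = embed i x"
    using assms unfolding glued_V_def by blast
  obtain \<alpha> \<beta> where pair: "handle_pair i = (\<alpha>, \<beta>)" "\<alpha> \<in> {1,2,3}" "\<beta> \<in> {1,2,3}" "\<alpha> \<noteq> \<beta>"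
    using handle_pair_image i by blast
  show ?thesis
    unfolding v glued_lists_embed pair(1) using card_gadget_lists[OF pair(2-4)] .
qed

theorem lemma2:
  fixes s :: "nat \<Rightarrow> bool"
  shows "\<not> choosable glued_V (glued_E s) 3"
proof
  assume "choosable glued_V (glued_E s) 3"
  then obtain \<phi> :: "gv \<Rightarrow> nat" where lists: "\<forall>v\<in>glued_V. \<phi> v \<in> glued_lists s v"
    and proper: "\<forall>u\<in>glued_V. \<forall>v\<in>glued_V. adj (glued_E s) u v \<longrightarrow> \<phi> u \<noteq> \<phi> v"
    using card_glued_lists by (rule choosableD)
  have copy_lists: "\<phi> (embed i x) \<in> gadget_lists (s i) (handle_pair i) x" if "i < 6" for i x
    using lists embed_in_glued_V[OF that] glued_lists_embed by metis
  have copy_proper: "\<phi> (embed i x) \<noteq> \<phi> (embed i y)"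
    if "i < 6" "(x, y) \<in> J_edges (s i)" for i x y
    using proper embed_in_glued_V[OF that(1)] adj_glued_E_embed[of i x y s, OF that] by blast
  have handle: "Ha = embed 0 a" "Hb = embed 0 b"
    by (simp_all add: embed_def)
  have "\<phi> Ha \<in> {1,2,3}" "\<phi> Hb \<in> {1,2,3}"
    using copy_lists[of 0 a] copy_lists[of 0 b] unfolding handle
    by (simp_all add: gadget_lists_def handle_pair_def)
  moreover have "\<phi> Ha \<noteq> \<phi> Hb"
    using copy_proper[of 0 a b] unfolding handle by (simp add: J1_edges_def J2_edges_def)
  ultimately have "(\<phi> Ha, \<phi> Hb) \<in> handle_pair ` {..<6}"
    unfolding handle_pair_image by simp
  then obtain i where i: "i < 6" and pair: "handle_pair i = (\<phi> Ha, \<phi> Hb)"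
    by (metis imageE lessThan_iff)
  show False
    using gadget_handle_colouring_not_extendable[of "\<lambda>x. \<phi> (embed i x)" "s i",
        OF copy_lists[OF i, unfolded pair] copy_proper[OF i]]
    by (simp add: embed_def)
qed

end
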